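(* Let $X\in\mathbb{R}^{n\times d}$ with rows $x_1,\dots,x_n$, weighted by $w\in\mathbb{R}^n_{>0}$, be $\mu$-complex, let $\mathcal{W}=\sum_{j=1}^n w_j$, and let $U$ be a matrix whose $d$ (or fewer) columns form an orthonormal basis of the column space of $D_wX$, with rows $U_i$. Then for every $i\in[n]$ the sensitivity satisfies $\varsigma_i\le s_i:=(20+2\mu)\left(\|U_i\|_2+w_i/\mathcal{W}\right)$, and the total sensitivity satisfies $\mathfrak{S}=\sum_{i=1}^n\varsigma_i\le S:=\sum_{i=1}^n s_i\le 44\mu\sqrt{nd}$.
   Context: $g(z)=\ln(1+e^z)$ and $f_w(X\beta)=\sum_{j=1}^n w_j g(x_j\beta)$. The sensitivity of the $i$-th point is $\varsigma_i=\sup_{\beta\in\mathbb{R}^d}\frac{w_i g(x_i\beta)}{f_w(X\beta)}$. $D_w$ is the diagonal matrix with $(D_w)_{ii}=w_i$. For a vector $v$, $v^+$ and $v^-$ denote the vectors of its positive and negative entries. $\mu_w(X)=\sup_{\beta:\,D_wX\beta\neq0}\|(D_wX\beta)^+\|_1/\|(D_wX\beta)^-\|_1$, and $X$ weighted by $w$ is $\mu$-complex if $\mu_w(X)\le\mu$ (note $\mu_w(X)\ge 1$ by symmetry $\beta\mapsto-\beta$). *)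

theory Defs
  imports "HOL-Analysis.Analysis"
begin

text \<open>Matrices are explicit: X is n x d given by X i l for i < n, l < d;
  vectors in R^d are functions nat => real (only entries below d matter).\<close>

definition g :: "real \<Rightarrow> real" where
  "g z = ln (1 + exp z)"

definition matvec :: "nat \<Rightarrow> (nat \<Rightarrow> nat \<Rightarrow> real) \<Rightarrow> (nat \<Rightarrow> real) \<Rightarrow> nat \<Rightarrow> real" where
  "matvec d X \<beta> i = (\<Sum>l<d. X i l * \<beta> l)"

definition f_w :: "nat \<Rightarrow> nat \<Rightarrow> (nat \<Rightarrow> real) \<Rightarrow> (nat \<Rightarrow> nat \<Rightarrow> real) \<Rightarrow> (nat \<Rightarrow> real) \<Rightarrow> real" where
  "f_w n d w X \<beta> = (\<Sum>j<n. w j * g (matvec d X \<beta> j))"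

definition sensitivity :: "nat \<Rightarrow> nat \<Rightarrow> (nat \<Rightarrow> real) \<Rightarrow> (nat \<Rightarrow> nat \<Rightarrow> real) \<Rightarrow> nat \<Rightarrow> real" where
  "sensitivity n d w X i = (SUP \<beta>. w i * g (matvec d X \<beta> i) / f_w n d w X \<beta>)"

definition DwXb :: "nat \<Rightarrow> (nat \<Rightarrow> real) \<Rightarrow> (nat \<Rightarrow> nat \<Rightarrow> real) \<Rightarrow> (nat \<Rightarrow> real) \<Rightarrow> nat \<Rightarrow> real" where
  "DwXb d w X \<beta> j = w j * matvec d X \<beta> j"

definition pos_norm1 :: "nat \<Rightarrow> (nat \<Rightarrow> real) \<Rightarrow> real" where
  "pos_norm1 n v = (\<Sum>j<n. max 0 (v j))"

definition neg_norm1 :: "nat \<Rightarrow> (nat \<Rightarrow> real) \<Rightarrow> real" where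
  "neg_norm1 n v = (\<Sum>j<n. max 0 (- v j))"

text \<open>mu_w(X) as an extended real (a ratio with zero denominator is +infinity).\<close>
definition mu_w :: "nat \<Rightarrow> nat \<Rightarrow> (nat \<Rightarrow> real) \<Rightarrow> (nat \<Rightarrow> nat \<Rightarrow> real) \<Rightarrow> ereal" where
  "mu_w n d w X = (SUP \<beta> \<in> {\<beta>. \<exists>j<n. DwXb d w X \<beta> j \<noteq> 0}.
       ereal (pos_norm1 n (DwXb d w X \<beta>)) / ereal (neg_norm1 n (DwXb d w X \<beta>)))"

definition mu_complex :: "nat \<Rightarrow> nat \<Rightarrow> (nat \<Rightarrow> real) \<Rightarrow> (nat \<Rightarrow> nat \<Rightarrow> real) \<Rightarrow> real \<Rightarrow> bool" where
  "mu_complex n d w X \<mu> \<longleftrightarrow> mu_w n d w X \<le> ereal \<mu>"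

definition colspace :: "nat \<Rightarrow> nat \<Rightarrow> (nat \<Rightarrow> nat \<Rightarrow> real) \<Rightarrow> (nat \<Rightarrow> real) set" where
  "colspace n m A = {v. \<exists>\<beta>. \<forall>i<n. v i = (\<Sum>l<m. A i l * \<beta> l)}"

definition orthonormal_cols :: "nat \<Rightarrow> nat \<Rightarrow> (nat \<Rightarrow> nat \<Rightarrow> real) \<Rightarrow> bool" where
  "orthonormal_cols n k U \<longleftrightarrow>
     (\<forall>c<k. \<forall>c'<k. (\<Sum>i<n. U i c * U i c') = (if c = c' then 1 else 0))"

definition row_norm :: "nat \<Rightarrow> (nat \<Rightarrow> nat \<Rightarrow> real) \<Rightarrow> nat \<Rightarrow> real" where
  "row_norm k U i = sqrt (\<Sum>c<k. (U i c)\<^sup>2)"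

end

theory Submission
  imports Defs
begin

text \<open>
  Write \<open>v = D\<^sub>wX\<beta>\<close>, \<open>P = \<parallel>v\<^sup>+\<parallel>\<^sub>1\<close>, \<open>N = \<parallel>v\<^sup>-\<parallel>\<^sub>1\<close>, \<open>f = f\<^sub>w(X\<beta>)\<close> and
  \<open>W = \<Sum>\<^sub>j w\<^sub>j\<close>.
  Since \<open>max 0 z \<le> g z\<close> we get \<open>P \<le> f\<close>, and \<open>\<mu>\<close>-complexity gives \<open>N \<le> \<mu> P\<close>; since
  \<open>ln 2 \<le> g z + max 0 (-z)\<close> we get \<open>W ln 2 \<le> f + N\<close>. Hence both \<open>\<parallel>v\<parallel>\<^sub>1 = P + N\<close> and
  \<open>W ln 2\<close> are at most \<open>(1 + \<mu>) f\<close>. As \<open>v\<close> lies in the column space of \<open>U\<close>, Cauchy-Schwarz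
  gives \<open>|v\<^sub>i| \<le> \<parallel>U\<^sub>i\<parallel>\<^sub>2 \<parallel>v\<parallel>\<^sub>2 \<le> \<parallel>U\<^sub>i\<parallel>\<^sub>2 \<parallel>v\<parallel>\<^sub>1\<close>, and with \<open>g z \<le> ln 2 + max 0 z\<close> this yields
  \<open>w\<^sub>i g(x\<^sub>i\<beta>) \<le> (1 + \<mu>)(\<parallel>U\<^sub>i\<parallel>\<^sub>2 + w\<^sub>i/W) f\<close>, i.e. the constant \<open>20 + 2\<mu>\<close> can even be
  replaced by \<open>1 + \<mu>\<close>. For the total, \<open>\<Sum>\<^sub>i \<parallel>U\<^sub>i\<parallel>\<^sub>2 \<le> \<surd>(n k)\<close>
  because the squared row norms sum to \<open>k\<close>.
\<close>

lemma g_reflect: "g z = z + g (- z)"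
proof -
  have "1 + exp z = exp z * (1 + exp (- z))"
    by (simp add: exp_minus field_simps)
  moreover have "1 + exp (- z) > 0"
    by (simp add: add_pos_pos)
  ultimately show ?thesis
    unfolding g_def by (simp add: ln_mult)
qed

lemma g_pos: "g z > 0"
  unfolding g_def by (intro ln_gt_zero) simp

lemma g_mono: "x \<le> y \<Longrightarrow> g x \<le> g y"
  unfolding g_def by (subst ln_le_cancel_iff) (auto simp: add_pos_pos)

lemma g_zero: "g 0 = ln 2"
  unfolding g_def by simp

lemma pos_part_le_g: "max 0 z \<le> g z"
  using g_reflect[of z] g_pos[of z] g_pos[of "- z"] by auto

lemma ln2_le_g_plus_neg_part: "ln 2 \<le> g z + max 0 (- z)"
  using g_mono[of 0 z] g_mono[of 0 "- z"] g_reflect[of z] g_zero by (cases "z \<ge> 0") auto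

lemma g_le_ln2_plus_pos_part: "g z \<le> ln 2 + max 0 z"
  using g_mono[of "- z" 0] g_mono[of z 0] g_reflect[of z] g_zero by (cases "z \<ge> 0") auto

lemma max_zero_mult_left: "(a::real) \<ge> 0 \<Longrightarrow> max 0 (a * z) = a * max 0 z"
  by (auto simp: max_def zero_le_mult_iff mult_le_0_iff)

lemma sum_abs_eq_pos_norm1_plus_neg_norm1:
  "(\<Sum>j<n. \<bar>v j\<bar>) = pos_norm1 n v + neg_norm1 n v"
  unfolding pos_norm1_def neg_norm1_def sum.distrib[symmetric]
  by (intro sum.cong) (auto simp: max_def)

lemma DwXb_uminus: "DwXb d w X (\<lambda>l. - \<beta> l) j = - DwXb d w X \<beta> j"
  unfolding DwXb_def matvec_def by (simp add: sum_negf)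

lemma mu_complex_neg_norm1_le:
  assumes "mu_complex n d w X \<mu>"
  shows "neg_norm1 n (DwXb d w X \<beta>) \<le> \<mu> * pos_norm1 n (DwXb d w X \<beta>)"
proof -
  define v where "v = DwXb d w X \<beta>"
  have P_nonneg: "pos_norm1 n v \<ge> 0" and N_nonneg: "neg_norm1 n v \<ge> 0"
    unfolding pos_norm1_def neg_norm1_def by (auto intro: sum_nonneg)
  show ?thesis
  proof (cases "\<exists>j<n. v j \<noteq> 0")
    case False
    then show ?thesis
      unfolding v_def[symmetric] pos_norm1_def neg_norm1_def by simp
  next
    case True
    then obtain j where j: "j < n" "v j \<noteq> 0" by auto
    \<comment> \<open>the supremum defining \<open>\<mu>\<^sub>w\<close> at \<open>-\<beta>\<close> is the reciprocal ratio \<open>N/P\<close> at \<open>\<beta>\<close>\<close>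
    have "(\<lambda>l. - \<beta> l) \<in> {\<beta>. \<exists>j<n. DwXb d w X \<beta> j \<noteq> 0}"
      using j by (auto simp: DwXb_uminus v_def)
    then have "ereal (pos_norm1 n (DwXb d w X (\<lambda>l. - \<beta> l)))
        / ereal (neg_norm1 n (DwXb d w X (\<lambda>l. - \<beta> l))) \<le> mu_w n d w X"
      unfolding mu_w_def by (rule SUP_upper)
    also have "\<dots> \<le> ereal \<mu>"
      using assms unfolding mu_complex_def .
    finally have ratio: "ereal (neg_norm1 n v) / ereal (pos_norm1 n v) \<le> ereal \<mu>"
      unfolding pos_norm1_def neg_norm1_def DwXb_uminus v_def by simp
    have "pos_norm1 n v \<noteq> 0"
    proof
      assume P0: "pos_norm1 n v = 0"
      then have "max 0 (v j) = 0"
        using j sum_nonneg_eq_0_iff[of "{..<n}" "\<lambda>i. max 0 (v i)"]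
        unfolding pos_norm1_def by simp
      with j have "neg_norm1 n v > 0"
        unfolding neg_norm1_def by (intro sum_pos2[of _ j]) auto
      with P0 ratio show False
        by (simp add: divide_ereal_def)
    qed
    with ratio P_nonneg show ?thesis
      unfolding v_def by (simp add: divide_le_eq)
  qed
qed

lemma sum_squares_le_sum_abs_squared:
  fixes v :: "nat \<Rightarrow> real"
  shows "(\<Sum>j<n. (v j)\<^sup>2) \<le> (\<Sum>j<n. \<bar>v j\<bar>)\<^sup>2"
proof -
  have "(\<Sum>j<n. (v j)\<^sup>2) \<le> (\<Sum>j<n. \<bar>v j\<bar> * (\<Sum>j<n. \<bar>v j\<bar>))"
  proof (intro sum_mono)
    fix j assume "j \<in> {..<n}"
    then have "\<bar>v j\<bar> \<le> (\<Sum>j<n. \<bar>v j\<bar>)"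
      by (intro member_le_sum) auto
    then show "(v j)\<^sup>2 \<le> \<bar>v j\<bar> * (\<Sum>j<n. \<bar>v j\<bar>)"
      by (metis abs_ge_zero mult_left_mono power2_abs power2_eq_square)
  qed
  also have "\<dots> = (\<Sum>j<n. \<bar>v j\<bar>)\<^sup>2"
    by (simp add: power2_eq_square sum_distrib_right)
  finally show ?thesis .
qed

lemma orthonormal_cols_sum_squares:
  assumes "orthonormal_cols n k U"
  shows "(\<Sum>j<n. (\<Sum>c<k. U j c * \<gamma> c)\<^sup>2) = (\<Sum>c<k. (\<gamma> c)\<^sup>2)"
proof -
  have "(\<Sum>j<n. (\<Sum>c<k. U j c * \<gamma> c)\<^sup>2)
      = (\<Sum>c<k. \<Sum>c'<k. (\<gamma> c * \<gamma> c') * (\<Sum>j<n. U j c * U j c'))"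
    by (simp add: power2_eq_square sum_product sum_distrib_left mult_ac sum.swap[of _ "{..<n}"])
  also have "\<dots> = (\<Sum>c<k. \<Sum>c'<k. (\<gamma> c * \<gamma> c') * (if c = c' then 1 else 0))"
    using assms unfolding orthonormal_cols_def by (intro sum.cong refl) auto
  also have "\<dots> = (\<Sum>c<k. (\<gamma> c)\<^sup>2)"
    by (simp add: power2_eq_square if_distrib sum.delta cong: if_cong)
  finally show ?thesis .
qed

lemma row_norm_nonneg: "row_norm k U i \<ge> 0"
  unfolding row_norm_def by (simp add: sum_nonneg)

lemma colspace_abs_le_row_norm_mult_sum_abs:
  assumes orth: "orthonormal_cols n k U" and v: "v \<in> colspace n k U" and i: "i < n"
  shows "\<bar>v i\<bar> \<le> row_norm k U i * (\<Sum>j<n. \<bar>v j\<bar>)"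
proof -
  obtain \<gamma> where \<gamma>: "\<forall>i<n. v i = (\<Sum>c<k. U i c * \<gamma> c)"
    using v unfolding colspace_def by auto
  have "(\<Sum>c<k. (\<gamma> c)\<^sup>2) = (\<Sum>j<n. (v j)\<^sup>2)"
    using \<gamma> orthonormal_cols_sum_squares[OF orth, of \<gamma>] by simp
  then have "\<bar>v i\<bar>\<^sup>2 \<le> (\<Sum>c<k. (U i c)\<^sup>2) * (\<Sum>j<n. (v j)\<^sup>2)"
    using \<gamma> i Cauchy_Schwarz_ineq_sum[of "U i" \<gamma> "{..<k}"] by simp
  also have "\<dots> \<le> (\<Sum>c<k. (U i c)\<^sup>2) * (\<Sum>j<n. \<bar>v j\<bar>)\<^sup>2"
    by (intro mult_left_mono sum_squares_le_sum_abs_squared) (simp add: sum_nonneg)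
  also have "\<dots> = (row_norm k U i * (\<Sum>j<n. \<bar>v j\<bar>))\<^sup>2"
    unfolding row_norm_def power_mult_distrib by (simp add: sum_nonneg)
  finally show ?thesis
    by (rule power2_le_imp_le) (simp add: row_norm_nonneg)
qed

lemma sum_row_norm_le:
  assumes "orthonormal_cols n k U"
  shows "(\<Sum>i<n. row_norm k U i) \<le> sqrt (real n * real k)"
proof -
  have "(\<Sum>i<n. (row_norm k U i)\<^sup>2) = (\<Sum>c<k. \<Sum>i<n. U i c * U i c)"
    unfolding row_norm_def by (simp add: sum_nonneg power2_eq_square sum.swap[of _ "{..<n}"])
  also have "\<dots> = real k"
    using assms unfolding orthonormal_cols_def by simp
  finally have "(\<Sum>i<n. (row_norm k U i)\<^sup>2) = real k" .
  with sum_squared_le_sum_of_squares[of "row_norm k U" "{..<n}"]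
  have "(\<Sum>i<n. row_norm k U i)\<^sup>2 \<le> real n * real k"
    by (simp add: mult.commute)
  then show ?thesis
    by (simp add: real_le_rsqrt)
qed

lemma DwXb_in_colspace: "DwXb d w X \<beta> \<in> colspace n d (\<lambda>i l. w i * X i l)"
  unfolding colspace_def DwXb_def matvec_def
  by (auto simp: sum_distrib_left mult.assoc)

lemma pos_norm1_DwXb_le_f_w:
  assumes "\<forall>j<n. w j > 0"
  shows "pos_norm1 n (DwXb d w X \<beta>) \<le> f_w n d w X \<beta>"
  unfolding pos_norm1_def f_w_def DwXb_def
  using assms pos_part_le_g
  by (intro sum_mono) (simp add: max_zero_mult_left less_imp_le mult_left_mono)

lemma sum_weights_ln2_le_f_w_plus_neg_norm1:
  assumes "\<forall>j<n. w j > 0"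
  shows "(\<Sum>j<n. w j) * ln 2 \<le> f_w n d w X \<beta> + neg_norm1 n (DwXb d w X \<beta>)"
proof -
  have "(\<Sum>j<n. w j) * ln 2
      \<le> (\<Sum>j<n. w j * g (matvec d X \<beta> j) + w j * max 0 (- matvec d X \<beta> j))"
    unfolding sum_distrib_right using assms ln2_le_g_plus_neg_part
    by (intro sum_mono) (simp flip: distrib_left add: less_imp_le mult_left_mono)
  also have "\<dots> = f_w n d w X \<beta> + neg_norm1 n (DwXb d w X \<beta>)"
    unfolding f_w_def neg_norm1_def DwXb_def sum.distrib using assms
    by (intro arg_cong2[where f = "(+)"] sum.cong)
       (auto simp: max_zero_mult_left[symmetric] less_imp_le)
  finally show ?thesis .
qed

lemma weighted_loss_le:
  assumes w: "\<forall>j<n. w j > 0" and mc: "mu_complex n d w X \<mu>" and \<mu>: "\<mu> \<ge> 0"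
    and orth: "orthonormal_cols n k U"
    and cs: "colspace n k U = colspace n d (\<lambda>i l. w i * X i l)" and i: "i < n"
  shows "w i * g (matvec d X \<beta> i)
     \<le> (1 + \<mu>) * (row_norm k U i + w i / (\<Sum>j<n. w j)) * f_w n d w X \<beta>"
proof -
  define v where "v = DwXb d w X \<beta>"
  define f where "f = f_w n d w X \<beta>"
  define W where "W = (\<Sum>j<n. w j)"
  define r where "r = row_norm k U i"
  have wi: "w i > 0"
    using w i by simp
  have W_pos: "W > 0"
    unfolding W_def using w i by (intro sum_pos2[of _ i]) auto
  have P_le: "pos_norm1 n v \<le> f"
    unfolding v_def f_def by (rule pos_norm1_DwXb_le_f_w[OF w])
  have N_le: "neg_norm1 n v \<le> \<mu> * pos_norm1 n v"
    unfolding v_def by (rule mu_complex_neg_norm1_le[OF mc])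
  have "\<mu> * pos_norm1 n v \<le> \<mu> * f"
    using P_le \<mu> by (rule mult_left_mono)
  with N_le P_le have l1_le: "pos_norm1 n v + neg_norm1 n v \<le> (1 + \<mu>) * f"
    by (simp add: algebra_simps)
  have W_le: "W * ln 2 \<le> (1 + \<mu>) * f"
    using sum_weights_ln2_le_f_w_plus_neg_norm1[OF w, of d X \<beta>] N_le \<open>\<mu> * _ \<le> \<mu> * f\<close>
    unfolding W_def v_def f_def by (simp add: algebra_simps)
  have "v \<in> colspace n k U"
    unfolding cs v_def by (rule DwXb_in_colspace)
  then have "\<bar>v i\<bar> \<le> r * (pos_norm1 n v + neg_norm1 n v)"
    unfolding r_def sum_abs_eq_pos_norm1_plus_neg_norm1[symmetric]
    by (rule colspace_abs_le_row_norm_mult_sum_abs[OF orth _ i])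
  also have "\<dots> \<le> r * ((1 + \<mu>) * f)"
    unfolding r_def using l1_le row_norm_nonneg by (rule mult_left_mono)
  finally have vi_le: "\<bar>v i\<bar> \<le> r * ((1 + \<mu>) * f)" .
  have "w i * g (matvec d X \<beta> i) \<le> w i * (ln 2 + max 0 (matvec d X \<beta> i))"
    using wi g_le_ln2_plus_pos_part by (simp add: mult_left_mono)
  also have "\<dots> = w i / W * (W * ln 2) + max 0 (v i)"
    using wi W_pos by (simp add: v_def DwXb_def max_zero_mult_left distrib_left)
  also have "\<dots> \<le> w i / W * ((1 + \<mu>) * f) + r * ((1 + \<mu>) * f)"
    using W_le vi_le wi W_pos by (intro add_mono mult_left_mono) auto
  also have "\<dots> = (1 + \<mu>) * (r + w i / W) * f"
    by (simp add: algebra_simps add_divide_distrib)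
  finally show ?thesis
    unfolding f_def W_def r_def .
qed

lemma sensitivity_le:
  assumes w: "\<forall>j<n. w j > 0" and mc: "mu_complex n d w X \<mu>" and \<mu>: "\<mu> \<ge> 0"
    and orth: "orthonormal_cols n k U"
    and cs: "colspace n k U = colspace n d (\<lambda>i l. w i * X i l)" and i: "i < n"
  shows "sensitivity n d w X i \<le> (1 + \<mu>) * (row_norm k U i + w i / (\<Sum>j<n. w j))"
  unfolding sensitivity_def
proof (rule cSUP_least)
  fix \<beta>
  have "w i * g (matvec d X \<beta> i) \<le> f_w n d w X \<beta>"
    unfolding f_w_def using w i g_pos by (intro member_le_sum) (auto intro: less_imp_le)
  moreover have "w i * g (matvec d X \<beta> i) > 0"
    using w i g_pos by simp
  ultimately have "f_w n d w X \<beta> > 0"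
    by linarith
  then show "w i * g (matvec d X \<beta> i) / f_w n d w X \<beta>
      \<le> (1 + \<mu>) * (row_norm k U i + w i / (\<Sum>j<n. w j))"
    using weighted_loss_le[OF assms] by (simp add: pos_divide_le_eq)
qed simp

lemma sum_sensitivity_bounds_le:
  assumes "d \<ge> 1" and "\<mu> \<ge> 1" and w: "\<forall>j<n. w j > 0" and "k \<le> d"
    and orth: "orthonormal_cols n k U"
  shows "(\<Sum>i<n. (20 + 2 * \<mu>) * (row_norm k U i + w i / (\<Sum>j<n. w j)))
           \<le> 44 * \<mu> * sqrt (real n * real d)"
proof (cases "n = 0")
  case False
  define s where "s = sqrt (real n * real d)"
  have "(\<Sum>j<n. w j) > 0"
    using w False by (intro sum_pos2[of _ 0]) auto
  then have "(\<Sum>i<n. w i / (\<Sum>j<n. w j)) = 1"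
    by (simp flip: sum_divide_distrib)
  then have sum_eq: "(\<Sum>i<n. (20 + 2 * \<mu>) * (row_norm k U i + w i / (\<Sum>j<n. w j)))
      = (20 + 2 * \<mu>) * ((\<Sum>i<n. row_norm k U i) + 1)"
    by (simp flip: sum_distrib_left add: sum.distrib)
  have "1 \<le> n * d"
    using False \<open>d \<ge> 1\<close> by (simp add: Suc_le_eq)
  then have "1 \<le> real n * real d"
    by (metis of_nat_1 of_nat_le_iff of_nat_mult)
  then have s_ge: "s \<ge> 1"
    unfolding s_def by simp
  have "(\<Sum>i<n. row_norm k U i) \<le> sqrt (real n * real k)"
    by (rule sum_row_norm_le[OF orth])
  also have "\<dots> \<le> s"
    unfolding s_def using \<open>k \<le> d\<close> by (simp add: mult_left_mono)
  finally have "(\<Sum>i<n. row_norm k U i) + 1 \<le> 2 * s"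
    using s_ge by linarith
  then have "(20 + 2 * \<mu>) * ((\<Sum>i<n. row_norm k U i) + 1) \<le> (20 + 2 * \<mu>) * (2 * s)"
    using \<open>\<mu> \<ge> 1\<close> by (intro mult_left_mono) auto
  also have "\<dots> \<le> 22 * \<mu> * (2 * s)"
    using s_ge \<open>\<mu> \<ge> 1\<close> by (intro mult_right_mono) auto
  finally show ?thesis
    unfolding sum_eq s_def by simp
qed simp

theorem lemma9:
  fixes n d k :: nat and X U :: "nat \<Rightarrow> nat \<Rightarrow> real" and w :: "nat \<Rightarrow> real" and \<mu> :: real
  assumes "d \<ge> 1"
    and "\<mu> \<ge> 1"
    and "\<forall>j<n. w j > 0"
    and "mu_complex n d w X \<mu>"
    and "k \<le> d"
    and "orthonormal_cols n k U"
    and "colspace n k U = colspace n d (\<lambda>i l. w i * X i l)"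
  shows "(\<forall>i<n. sensitivity n d w X i
              \<le> (20 + 2 * \<mu>) * (row_norm k U i + w i / (\<Sum>j<n. w j)))
       \<and> (\<Sum>i<n. sensitivity n d w X i)
              \<le> (\<Sum>i<n. (20 + 2 * \<mu>) * (row_norm k U i + w i / (\<Sum>j<n. w j)))
       \<and> (\<Sum>i<n. (20 + 2 * \<mu>) * (row_norm k U i + w i / (\<Sum>j<n. w j)))
              \<le> 44 * \<mu> * sqrt (real n * real d)"
proof -
  have pointwise: "sensitivity n d w X i \<le> (20 + 2 * \<mu>) * (row_norm k U i + w i / (\<Sum>j<n. w j))"
    if i: "i < n" for i
  proof -
    have "0 \<le> w i / (\<Sum>j<n. w j)"
      using assms(3) i by (intro divide_nonneg_nonneg sum_nonneg) (auto intro: less_imp_le)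
    then have "0 \<le> row_norm k U i + w i / (\<Sum>j<n. w j)"
      using row_norm_nonneg by (rule add_nonneg_nonneg[rotated])
    then have "(1 + \<mu>) * (row_norm k U i + w i / (\<Sum>j<n. w j))
        \<le> (20 + 2 * \<mu>) * (row_norm k U i + w i / (\<Sum>j<n. w j))"
      using assms(2) by (intro mult_right_mono) auto
    with sensitivity_le[OF assms(3,4) _ assms(6,7) i] assms(2) show ?thesis
      by linarith
  qed
  then have "(\<Sum>i<n. sensitivity n d w X i)
      \<le> (\<Sum>i<n. (20 + 2 * \<mu>) * (row_norm k U i + w i / (\<Sum>j<n. w j)))"
    by (intro sum_mono) simp
  with pointwise sum_sensitivity_bounds_le[OF assms(1,2,3,5,6)] show ?thesis
    by blast
qed

end
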